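(* Let $I=(f_1,\dots,f_s)$ be an ideal of $R$ generated by homogeneous polynomials and let $M$ be a graded generalized Eulerian $A_n(K)$-module. Then $H^i_I(M)$ is a generalized Eulerian $A_n(K)$-module for all $i\ge0$.
   Context: $K$ is a field of characteristic zero, $R=K[X_1,\dots,X_n]$ standard graded, $A_n(K)$ the Weyl algebra graded by $\deg X_i=1$, $\deg\partial_i=-1$; $\mathcal E_n=\sum_iX_i\partial_i$; $|z|$ is the degree of homogeneous $z$. A graded left $A_n(K)$-module $M$ is generalized Eulerian if for every homogeneous $z\in M$ there is $a\ge1$ with $(\mathcal E_n-|z|)^az=0$. $H^i_I(M)$ is the local cohomology, with its natural graded $A_n(K)$-module structure (e.g. via the Čech complex on $f_1,\dots,f_s$). *)

theory Defs
  imports Main "HOL-Library.Poly_Mapping"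
begin

type_synonym 'k mpoly = "(nat \<Rightarrow>\<^sub>0 nat) \<Rightarrow>\<^sub>0 'k"

definition mon_deg :: "(nat \<Rightarrow>\<^sub>0 nat) \<Rightarrow> nat" where
  "mon_deg \<alpha> = (\<Sum>i\<in>Poly_Mapping.keys \<alpha>. Poly_Mapping.lookup \<alpha> i)"

definition in_vars :: "nat \<Rightarrow> 'k::zero mpoly \<Rightarrow> bool" where
  "in_vars n p \<longleftrightarrow> (\<forall>\<alpha>\<in>Poly_Mapping.keys p. Poly_Mapping.keys \<alpha> \<subseteq> {..<n})"

definition homogeneous_poly :: "'k::zero mpoly \<Rightarrow> bool" where
  "homogeneous_poly p \<longleftrightarrow> (\<exists>e. \<forall>\<alpha>\<in>Poly_Mapping.keys p. mon_deg \<alpha> = e)"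

definition hdeg :: "'k::zero mpoly \<Rightarrow> nat" where
  "hdeg p = (if p = 0 then 0 else Max (mon_deg ` Poly_Mapping.keys p))"

definition pderiv_mp :: "nat \<Rightarrow> 'k::comm_ring_1 mpoly \<Rightarrow> 'k mpoly" where
  "pderiv_mp i p = (\<Sum>\<alpha>\<in>Poly_Mapping.keys p.
      Poly_Mapping.single (\<alpha> - Poly_Mapping.single i 1) (of_nat (Poly_Mapping.lookup \<alpha> i) * Poly_Mapping.lookup p \<alpha>))"

text \<open>A module is modelled on a type 'm with its additive group structure, a scalar
  multiplication sm by K, operators X i (multiplication by X_i) and D i (action of d_i)
  for i < n, and the homogeneous components hom d (degree d elements, including 0).\<close>

definition graded_weyl_module ::
  "nat \<Rightarrow> ('k::field \<Rightarrow> 'm::ab_group_add \<Rightarrow> 'm) \<Rightarrow> (nat \<Rightarrow> 'm \<Rightarrow> 'm) \<Rightarrow> (nat \<Rightarrow> 'm \<Rightarrow> 'm)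
   \<Rightarrow> (int \<Rightarrow> 'm set) \<Rightarrow> bool" where
  "graded_weyl_module n sm X D hom \<longleftrightarrow>
     \<comment> \<open>K-vector space\<close>
     (\<forall>a x y. sm a (x + y) = sm a x + sm a y) \<and>
     (\<forall>a b x. sm (a + b) x = sm a x + sm b x) \<and>
     (\<forall>a b x. sm (a * b) x = sm a (sm b x)) \<and>
     (\<forall>x. sm 1 x = x) \<and>
     \<comment> \<open>X_i, d_i act K-linearly\<close>
     (\<forall>i<n. \<forall>x y. X i (x + y) = X i x + X i y \<and> D i (x + y) = D i x + D i y) \<and>
     (\<forall>i<n. \<forall>a x. X i (sm a x) = sm a (X i x) \<and> D i (sm a x) = sm a (D i x)) \<and>
     \<comment> \<open>Weyl algebra relations\<close>
     (\<forall>i<n. \<forall>j<n. \<forall>x. X i (X j x) = X j (X i x)) \<and>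
     (\<forall>i<n. \<forall>j<n. \<forall>x. D i (D j x) = D j (D i x)) \<and>
     (\<forall>i<n. \<forall>j<n. \<forall>x. D i (X j x) - X j (D i x) = (if i = j then x else 0)) \<and>
     \<comment> \<open>grading: subspaces, direct sum decomposition, deg X_i = 1, deg d_i = -1\<close>
     (\<forall>d. 0 \<in> hom d \<and> (\<forall>x\<in>hom d. \<forall>y\<in>hom d. x + y \<in> hom d) \<and> (\<forall>a. \<forall>x\<in>hom d. sm a x \<in> hom d)) \<and>
     (\<forall>x. \<exists>c. finite {d. c d \<noteq> 0} \<and> (\<forall>d. c d \<in> hom d) \<and> x = (\<Sum>d\<in>{d. c d \<noteq> 0}. c d)) \<and>
     (\<forall>c. finite {d. c d \<noteq> 0} \<and> (\<forall>d. c d \<in> hom d) \<and> (\<Sum>d\<in>{d. c d \<noteq> 0}. c d) = 0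
          \<longrightarrow> (\<forall>d. c d = 0)) \<and>
     (\<forall>i<n. \<forall>d. \<forall>x\<in>hom d. X i x \<in> hom (d + 1) \<and> D i x \<in> hom (d - 1))"

definition euler :: "nat \<Rightarrow> (nat \<Rightarrow> 'm \<Rightarrow> 'm) \<Rightarrow> (nat \<Rightarrow> 'm \<Rightarrow> 'm) \<Rightarrow> 'm::ab_group_add \<Rightarrow> 'm" where
  "euler n X D x = (\<Sum>i<n. X i (D i x))"

definition gen_eulerian ::
  "nat \<Rightarrow> ('k::field \<Rightarrow> 'm::ab_group_add \<Rightarrow> 'm) \<Rightarrow> (nat \<Rightarrow> 'm \<Rightarrow> 'm) \<Rightarrow> (nat \<Rightarrow> 'm \<Rightarrow> 'm)
   \<Rightarrow> (int \<Rightarrow> 'm set) \<Rightarrow> bool" where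
  "gen_eulerian n sm X D hom \<longleftrightarrow>
     (\<forall>d. \<forall>z\<in>hom d. \<exists>a\<ge>1. ((\<lambda>x. euler n X D x - sm (of_int d) x) ^^ a) z = 0)"

definition Xmon :: "nat \<Rightarrow> (nat \<Rightarrow> 'm \<Rightarrow> 'm) \<Rightarrow> (nat \<Rightarrow>\<^sub>0 nat) \<Rightarrow> 'm \<Rightarrow> 'm" where
  "Xmon n X \<alpha> = foldr (\<lambda>i g. (X i ^^ Poly_Mapping.lookup \<alpha> i) \<circ> g) [0..<n] id"

definition pact :: "nat \<Rightarrow> ('k::field \<Rightarrow> 'm::ab_group_add \<Rightarrow> 'm) \<Rightarrow> (nat \<Rightarrow> 'm \<Rightarrow> 'm)
    \<Rightarrow> 'k mpoly \<Rightarrow> 'm \<Rightarrow> 'm" where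
  "pact n sm X p x = (\<Sum>\<alpha>\<in>Poly_Mapping.keys p. sm (Poly_Mapping.lookup p \<alpha>) (Xmon n X \<alpha> x))"

section \<open>Localization M_g: an element m/g^k is represented by the pair (m,k)\<close>

definition loc_eq :: "nat \<Rightarrow> ('k::field \<Rightarrow> 'm::ab_group_add \<Rightarrow> 'm) \<Rightarrow> (nat \<Rightarrow> 'm \<Rightarrow> 'm)
    \<Rightarrow> 'k mpoly \<Rightarrow> 'm \<times> nat \<Rightarrow> 'm \<times> nat \<Rightarrow> bool" where
  "loc_eq n sm X g mk mk' \<longleftrightarrow>
     (\<exists>l. pact n sm X (g ^ l)
            (pact n sm X (g ^ snd mk') (fst mk) - pact n sm X (g ^ snd mk) (fst mk')) = 0)"

text \<open>m/g^k is homogeneous of degree d in the graded module M_g iff it can be written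
  as m'/g^k' with m' homogeneous of degree d + k' deg g\<close>
definition loc_hom :: "nat \<Rightarrow> ('k::field \<Rightarrow> 'm::ab_group_add \<Rightarrow> 'm) \<Rightarrow> (nat \<Rightarrow> 'm \<Rightarrow> 'm)
    \<Rightarrow> (int \<Rightarrow> 'm set) \<Rightarrow> 'k mpoly \<Rightarrow> int \<Rightarrow> 'm \<times> nat \<Rightarrow> bool" where
  "loc_hom n sm X hom g d mk \<longleftrightarrow>
     (\<exists>m' k'. m' \<in> hom (d + int k' * int (hdeg g)) \<and> loc_eq n sm X g mk (m', k'))"

text \<open>(E_n - d) on M_g, via the induced A_n(K)-action:
  X_i (m/g^k) = X_i m / g^k,  d_i (m/g^k) = (g d_i m - k (d_i g) m)/g^(k+1)\<close>
definition loc_euler_minus :: "nat \<Rightarrow> ('k::field \<Rightarrow> 'm::ab_group_add \<Rightarrow> 'm) \<Rightarrow> (nat \<Rightarrow> 'm \<Rightarrow> 'm)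
    \<Rightarrow> (nat \<Rightarrow> 'm \<Rightarrow> 'm) \<Rightarrow> 'k mpoly \<Rightarrow> int \<Rightarrow> 'm \<times> nat \<Rightarrow> 'm \<times> nat" where
  "loc_euler_minus n sm X D g d mk =
     ((\<Sum>i<n. X i (pact n sm X g (D i (fst mk)) - sm (of_nat (snd mk)) (pact n sm X (pderiv_mp i g) (fst mk))))
        - sm (of_int d) (pact n sm X g (fst mk)),
      Suc (snd mk))"

text \<open>C^i = direct sum over S subset {0..<s}, card S = i, of M_(f_S), f_S = prod_(j in S) f_j.
  A cochain is given by a family of representatives c S = (m_S, k_S) of elements m_S / f_S^(k_S);
  only the components with S a subset of {..<s} of cardinality i matter.\<close>

definition fS :: "(nat \<Rightarrow> 'k::comm_ring_1 mpoly) \<Rightarrow> nat set \<Rightarrow> 'k mpoly" where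
  "fS f S = (\<Prod>j\<in>S. f j)"

definition coch_eq :: "nat \<Rightarrow> ('k::field \<Rightarrow> 'm::ab_group_add \<Rightarrow> 'm) \<Rightarrow> (nat \<Rightarrow> 'm \<Rightarrow> 'm)
    \<Rightarrow> nat \<Rightarrow> (nat \<Rightarrow> 'k mpoly) \<Rightarrow> nat \<Rightarrow> (nat set \<Rightarrow> 'm \<times> nat) \<Rightarrow> (nat set \<Rightarrow> 'm \<times> nat) \<Rightarrow> bool" where
  "coch_eq n sm X s f i c c' \<longleftrightarrow>
     (\<forall>S. S \<subseteq> {..<s} \<and> card S = i \<longrightarrow> loc_eq n sm X (fS f S) (c S) (c' S))"

text \<open>Cech differential: (dc)_T = sum_(t in T) (-1)^(position of t in T) c_(T-{t}),
  where m/f_(T-{t})^k is identified with (f_t^k m)/f_T^k; the components are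
  brought to a common denominator f_T^K with K the sum of the exponents.\<close>
definition cech_d :: "nat \<Rightarrow> ('k::field \<Rightarrow> 'm::ab_group_add \<Rightarrow> 'm) \<Rightarrow> (nat \<Rightarrow> 'm \<Rightarrow> 'm)
    \<Rightarrow> (nat \<Rightarrow> 'k mpoly) \<Rightarrow> (nat set \<Rightarrow> 'm \<times> nat) \<Rightarrow> (nat set \<Rightarrow> 'm \<times> nat)" where
  "cech_d n sm X f c T =
     (let K = (\<Sum>t\<in>T. snd (c (T - {t}))) in
      ((\<Sum>t\<in>T. (let x = pact n sm X (fS f T ^ (K - snd (c (T - {t}))) * f t ^ snd (c (T - {t})))
                                 (fst (c (T - {t})))
                        in if even (card {u\<in>T. u < t}) then x else - x)), K))"

definition cocycle :: "nat \<Rightarrow> ('k::field \<Rightarrow> 'm::ab_group_add \<Rightarrow> 'm) \<Rightarrow> (nat \<Rightarrow> 'm \<Rightarrow> 'm)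
    \<Rightarrow> nat \<Rightarrow> (nat \<Rightarrow> 'k mpoly) \<Rightarrow> nat \<Rightarrow> (nat set \<Rightarrow> 'm \<times> nat) \<Rightarrow> bool" where
  "cocycle n sm X s f i c \<longleftrightarrow> coch_eq n sm X s f (Suc i) (cech_d n sm X f c) (\<lambda>_. (0, 0))"

definition coboundary :: "nat \<Rightarrow> ('k::field \<Rightarrow> 'm::ab_group_add \<Rightarrow> 'm) \<Rightarrow> (nat \<Rightarrow> 'm \<Rightarrow> 'm)
    \<Rightarrow> nat \<Rightarrow> (nat \<Rightarrow> 'k mpoly) \<Rightarrow> nat \<Rightarrow> (nat set \<Rightarrow> 'm \<times> nat) \<Rightarrow> bool" where
  "coboundary n sm X s f i c \<longleftrightarrow>
     (if i = 0 then coch_eq n sm X s f 0 c (\<lambda>_. (0, 0))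
      else (\<exists>b. coch_eq n sm X s f i (cech_d n sm X f b) c))"

text \<open>homogeneous cochains of degree d (the Cech complex is a complex of graded modules
  with degree-preserving differential; H^i_d = Z^i_d / B^i_d)\<close>
definition coch_hom :: "nat \<Rightarrow> ('k::field \<Rightarrow> 'm::ab_group_add \<Rightarrow> 'm) \<Rightarrow> (nat \<Rightarrow> 'm \<Rightarrow> 'm)
    \<Rightarrow> (int \<Rightarrow> 'm set) \<Rightarrow> nat \<Rightarrow> (nat \<Rightarrow> 'k mpoly) \<Rightarrow> nat \<Rightarrow> int \<Rightarrow> (nat set \<Rightarrow> 'm \<times> nat) \<Rightarrow> bool" where
  "coch_hom n sm X hom s f i d c \<longleftrightarrow>
     (\<forall>S. S \<subseteq> {..<s} \<and> card S = i \<longrightarrow> loc_hom n sm X hom (fS f S) d (c S))"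

definition coch_euler_minus :: "nat \<Rightarrow> ('k::field \<Rightarrow> 'm::ab_group_add \<Rightarrow> 'm) \<Rightarrow> (nat \<Rightarrow> 'm \<Rightarrow> 'm)
    \<Rightarrow> (nat \<Rightarrow> 'm \<Rightarrow> 'm) \<Rightarrow> (nat \<Rightarrow> 'k mpoly) \<Rightarrow> int \<Rightarrow> (nat set \<Rightarrow> 'm \<times> nat) \<Rightarrow> (nat set \<Rightarrow> 'm \<times> nat)" where
  "coch_euler_minus n sm X D f d c S = loc_euler_minus n sm X D (fS f S) d (c S)"

text \<open>H^i_I(M) (I = (f_0,...,f_(s-1))) is generalized Eulerian: every homogeneous element of
  degree d, i.e. the class of a homogeneous cocycle c of degree d, is killed by some
  power (E_n - d)^a, a >= 1, i.e. (E_n - d)^a c is a coboundary.\<close>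
definition local_cohom_gen_eulerian :: "nat \<Rightarrow> ('k::field \<Rightarrow> 'm::ab_group_add \<Rightarrow> 'm) \<Rightarrow> (nat \<Rightarrow> 'm \<Rightarrow> 'm)
    \<Rightarrow> (nat \<Rightarrow> 'm \<Rightarrow> 'm) \<Rightarrow> (int \<Rightarrow> 'm set) \<Rightarrow> nat \<Rightarrow> (nat \<Rightarrow> 'k mpoly) \<Rightarrow> nat \<Rightarrow> bool" where
  "local_cohom_gen_eulerian n sm X D hom s f i \<longleftrightarrow>
     (\<forall>d c. cocycle n sm X s f i c \<and> coch_hom n sm X hom s f i d c \<longrightarrow>
        (\<exists>a\<ge>1. coboundary n sm X s f i ((coch_euler_minus n sm X D f d ^^ a) c)))"

end

theory Submission
  imports Defs "HOL.Modules"
begin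

text \<open>For g homogeneous of degree e, the commutation rule \<open>E g = g (E + e)\<close> in
  \<open>A_n(K)\<close> and Euler's identity \<open>\<Sum>i. X_i \<partial>_i g = e g\<close> give, on the localization
  \<open>M_g\<close>, \<open>(E - d)^a (m/g^k) = g^a (E - (d + k e))^a m / g^(k+a)\<close>.
  A homogeneous element of degree d of \<open>M_g\<close> can be written \<open>m/g^k\<close> with m homogeneous
  of degree \<open>d + k e\<close>, so by this formula it is killed by the power of \<open>E - d\<close> that kills
  m in M. A homogeneous Cech cochain has finitely many components, so one power of \<open>E - d\<close>
  kills all of them; in particular it kills every homogeneous cocycle, whose cohomology class
  therefore vanishes.\<close>

definition homogeneous_of :: "nat \<Rightarrow> nat \<Rightarrow> 'k::zero mpoly \<Rightarrow> bool" where
  "homogeneous_of n e p \<longleftrightarrow>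
     (\<forall>\<alpha>\<in>Poly_Mapping.keys p. Poly_Mapping.keys \<alpha> \<subseteq> {..<n} \<and> mon_deg \<alpha> = e)"

lemma in_vars_homogeneous_poly_imp_homogeneous_of:
  "in_vars n p \<Longrightarrow> homogeneous_poly p \<Longrightarrow> \<exists>e. homogeneous_of n e p"
  unfolding homogeneous_of_def in_vars_def homogeneous_poly_def by blast

lemma mon_deg_eq_sum_lessThan:
  "Poly_Mapping.keys \<alpha> \<subseteq> {..<n} \<Longrightarrow> mon_deg \<alpha> = (\<Sum>i<n. Poly_Mapping.lookup \<alpha> i)"
  unfolding mon_deg_def
  by (rule sum.mono_neutral_left) (auto simp: not_in_keys_iff_lookup_eq_zero)

lemma homogeneous_of_one: "homogeneous_of n 0 1"
  by (simp add: homogeneous_of_def mon_deg_def)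

lemma homogeneous_of_mult:
  assumes "homogeneous_of n e p" "homogeneous_of n e' q"
  shows "homogeneous_of n (e + e') (p * q)"
  unfolding homogeneous_of_def
proof
  fix \<gamma> assume "\<gamma> \<in> Poly_Mapping.keys (p * q)"
  then obtain \<alpha> \<beta> where \<gamma>: "\<gamma> = \<alpha> + \<beta>"
    and \<alpha>: "Poly_Mapping.keys \<alpha> \<subseteq> {..<n}" "mon_deg \<alpha> = e"
    and \<beta>: "Poly_Mapping.keys \<beta> \<subseteq> {..<n}" "mon_deg \<beta> = e'"
    using keys_mult assms unfolding homogeneous_of_def by blast
  have keys_\<gamma>: "Poly_Mapping.keys \<gamma> \<subseteq> {..<n}"
    using keys_add[of \<alpha> \<beta>] \<alpha> \<beta> \<gamma> by auto
  then have "mon_deg \<gamma> = mon_deg \<alpha> + mon_deg \<beta>"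
    using \<alpha> \<beta> by (simp add: mon_deg_eq_sum_lessThan \<gamma> lookup_add sum.distrib)
  with keys_\<gamma> \<alpha> \<beta> show "Poly_Mapping.keys \<gamma> \<subseteq> {..<n} \<and> mon_deg \<gamma> = e + e'" by simp
qed

lemma homogeneous_of_fS:
  "finite S \<Longrightarrow> (\<And>j. j \<in> S \<Longrightarrow> homogeneous_of n (e j) (f j))
     \<Longrightarrow> homogeneous_of n (\<Sum>j\<in>S. e j) (fS f S)"
  unfolding fS_def
  by (induction S rule: finite_induct) (auto simp: homogeneous_of_one homogeneous_of_mult)

lemma hdeg_eq_if_homogeneous_of: "homogeneous_of n e g \<Longrightarrow> g \<noteq> 0 \<Longrightarrow> hdeg g = e"
proof -
  assume "homogeneous_of n e g" "g \<noteq> 0"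
  then have "mon_deg ` Poly_Mapping.keys g = {e}"
    unfolding homogeneous_of_def by (auto simp flip: keys_eq_empty)
  with \<open>g \<noteq> 0\<close> show ?thesis by (simp add: hdeg_def)
qed

lemma poly_mapping_sum_single:
  "p = (\<Sum>\<alpha>\<in>Poly_Mapping.keys p. Poly_Mapping.single \<alpha> (Poly_Mapping.lookup p \<alpha>))"
  by (rule poly_mapping_eqI)
    (auto simp: lookup_sum lookup_single when_def not_in_keys_iff_lookup_eq_zero)

lemma single_add_diff_single:
  fixes \<alpha> :: "'a \<Rightarrow>\<^sub>0 nat"
  assumes "Poly_Mapping.lookup \<alpha> i \<noteq> 0"
  shows "Poly_Mapping.single i 1 + (\<alpha> - Poly_Mapping.single i 1) = \<alpha>"
  by (rule poly_mapping_eqI) (use assms in \<open>auto simp: lookup_add lookup_minus lookup_single when_def\<close>)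

lemma (in module) module_hom_funpow: "module_hom scale scale f \<Longrightarrow> module_hom scale scale (f ^^ a)"
  by (induction a) (auto intro: module_hom_compose module_hom_id)

text \<open>Only the relations used below: neither the commutation of the \<open>\<partial>_i\<close> nor the grading
  of M enters the argument.\<close>

locale weyl_module = module sm
  for sm :: "'k::field \<Rightarrow> 'm::ab_group_add \<Rightarrow> 'm" +
  fixes n :: nat and X D :: "nat \<Rightarrow> 'm \<Rightarrow> 'm"
  assumes module_hom_X: "i < n \<Longrightarrow> module_hom sm sm (X i)"
    and module_hom_D: "i < n \<Longrightarrow> module_hom sm sm (D i)"
    and X_commute: "i < n \<Longrightarrow> j < n \<Longrightarrow> X i (X j x) = X j (X i x)"
    and D_X_commutator: "i < n \<Longrightarrow> j < n \<Longrightarrow> D i (X j x) - X j (D i x) = (if i = j then x else 0)"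
begin

sublocale module_pair sm sm ..

abbreviation "act \<equiv> pact n sm X"
abbreviation "E \<equiv> euler n X D"

definition X_prod :: "nat list \<Rightarrow> (nat \<Rightarrow> nat) \<Rightarrow> 'm \<Rightarrow> 'm" where
  "X_prod L h = foldr (\<lambda>i g. (X i ^^ h i) \<circ> g) L id"

lemma X_prod_Nil [simp]: "X_prod [] h = id"
  by (simp add: X_prod_def)

lemma X_prod_Cons: "X_prod (i # L) h x = (X i ^^ h i) (X_prod L h x)"
  by (simp add: X_prod_def)

lemma Xmon_eq_X_prod: "Xmon n X \<alpha> = X_prod [0..<n] (Poly_Mapping.lookup \<alpha>)"
  by (simp add: Xmon_def X_prod_def)

lemma module_hom_X_prod: "set L \<subseteq> {..<n} \<Longrightarrow> module_hom sm sm (X_prod L h)"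
  by (induction L)
    (auto simp: X_prod_def intro!: module_hom_compose module_hom_funpow module_hom_X module_hom_id)

lemma X_funpow_commute: "i < n \<Longrightarrow> j < n \<Longrightarrow> X j ((X i ^^ a) y) = (X i ^^ a) (X j y)"
  by (induction a arbitrary: y) (auto simp: X_commute)

lemma X_X_prod_commute: "set L \<subseteq> {..<n} \<Longrightarrow> j < n \<Longrightarrow> X j (X_prod L h x) = X_prod L h (X j x)"
  by (induction L arbitrary: x) (auto simp: X_prod_Cons X_funpow_commute)

lemma X_funpow_X_prod_commute:
  "set L \<subseteq> {..<n} \<Longrightarrow> j < n \<Longrightarrow> (X j ^^ b) (X_prod L h x) = X_prod L h ((X j ^^ b) x)"
  by (induction b arbitrary: x) (auto simp: X_X_prod_commute)

lemma X_prod_X_prod: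
  "set L \<subseteq> {..<n} \<Longrightarrow> X_prod L h (X_prod L h' x) = X_prod L (\<lambda>i. h i + h' i) x"
proof (induction L arbitrary: x)
  case (Cons i L)
  then have L: "set L \<subseteq> {..<n}" and i: "i < n" by auto
  have "X_prod (i # L) h (X_prod (i # L) h' x) = (X i ^^ h i) (X_prod L h ((X i ^^ h' i) (X_prod L h' x)))"
    by (simp only: X_prod_Cons)
  also have "\<dots> = (X i ^^ h i) ((X i ^^ h' i) (X_prod L h (X_prod L h' x)))"
    by (simp only: X_funpow_X_prod_commute[OF L i])
  also have "\<dots> = (X i ^^ (h i + h' i)) (X_prod L (\<lambda>i. h i + h' i) x)"
    by (simp add: Cons.IH[OF L] funpow_add)
  finally show ?case by (simp only: X_prod_Cons)
qed simp

lemma X_prod_indicator: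
  "distinct L \<Longrightarrow> X_prod L (\<lambda>j. if j = i then 1 else 0) z = (if i \<in> set L then X i z else z)"
  by (induction L arbitrary: z) (auto simp: X_prod_Cons)

lemma X_prod_zero: "X_prod L (\<lambda>_. 0) x = x"
  by (induction L arbitrary: x) (auto simp: X_prod_Cons)

lemma module_hom_Xmon: "module_hom sm sm (Xmon n X \<alpha>)"
  unfolding Xmon_eq_X_prod by (rule module_hom_X_prod) auto

lemma Xmon_add: "Xmon n X (\<alpha> + \<beta>) x = Xmon n X \<alpha> (Xmon n X \<beta> x)"
  unfolding Xmon_eq_X_prod lookup_add by (subst X_prod_X_prod) auto

lemma Xmon_zero: "Xmon n X 0 x = x"
proof -
  have "Poly_Mapping.lookup (0::nat \<Rightarrow>\<^sub>0 nat) = (\<lambda>_. 0)" by (rule ext) simp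
  then show ?thesis by (simp add: Xmon_eq_X_prod X_prod_zero)
qed

lemma Xmon_single: "i < n \<Longrightarrow> Xmon n X (Poly_Mapping.single i 1) x = X i x"
proof -
  have "Poly_Mapping.lookup (Poly_Mapping.single i (1::nat)) = (\<lambda>j. if j = i then 1 else 0)"
    by (auto simp: lookup_single when_def)
  then show "i < n \<Longrightarrow> ?thesis"
    using X_prod_indicator[of "[0..<n]" i x] by (simp add: Xmon_eq_X_prod)
qed

lemma X_Xmon_commute: "i < n \<Longrightarrow> X i (Xmon n X \<alpha> x) = Xmon n X \<alpha> (X i x)"
  unfolding Xmon_eq_X_prod by (rule X_X_prod_commute) auto

lemma pact_superset:
  assumes "finite A" "Poly_Mapping.keys p \<subseteq> A"
  shows "act p x = (\<Sum>\<alpha>\<in>A. sm (Poly_Mapping.lookup p \<alpha>) (Xmon n X \<alpha> x))"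
  unfolding pact_def
  by (rule sum.mono_neutral_right[symmetric])
    (use assms in \<open>auto simp: not_in_keys_iff_lookup_eq_zero\<close>)

lemma pact_add: "act (p + q) x = act p x + act q x"
proof -
  let ?A = "Poly_Mapping.keys p \<union> Poly_Mapping.keys q \<union> Poly_Mapping.keys (p + q)"
  have "act (p + q) x = (\<Sum>\<alpha>\<in>?A. sm (Poly_Mapping.lookup (p + q) \<alpha>) (Xmon n X \<alpha> x))"
    by (rule pact_superset) auto
  also have "\<dots> = (\<Sum>\<alpha>\<in>?A. sm (Poly_Mapping.lookup p \<alpha>) (Xmon n X \<alpha> x))
      + (\<Sum>\<alpha>\<in>?A. sm (Poly_Mapping.lookup q \<alpha>) (Xmon n X \<alpha> x))"
    by (simp add: lookup_add scale_left_distrib sum.distrib)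
  also have "\<dots> = act p x + act q x"
    by (subst (1 2) pact_superset[where A = ?A]) auto
  finally show ?thesis .
qed

lemma pact_single: "act (Poly_Mapping.single \<alpha> c) x = sm c (Xmon n X \<alpha> x)"
  by (cases "c = 0") (auto simp: pact_def)

lemma pact_zero_poly [simp]: "act 0 x = 0"
  by (simp add: pact_def)

lemma pact_sum: "act (\<Sum>j\<in>J. p j) x = (\<Sum>j\<in>J. act (p j) x)"
  by (induction J rule: infinite_finite_induct) (auto simp: pact_add)

lemma module_hom_pact: "module_hom sm sm (act p)"
  unfolding pact_def[abs_def]
  by (intro module_hom_sum module_hom_scale module_hom_Xmon) (auto intro: module_axioms)

lemma pact_zero [simp]: "act p 0 = 0"
  by (rule module_hom.zero[OF module_hom_pact])

lemma pact_mult: "act (p * q) x = act p (act q x)"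
proof -
  have "p * q = (\<Sum>\<alpha>\<in>Poly_Mapping.keys p. \<Sum>\<beta>\<in>Poly_Mapping.keys q.
      Poly_Mapping.single (\<alpha> + \<beta>) (Poly_Mapping.lookup p \<alpha> * Poly_Mapping.lookup q \<beta>))"
    by (subst (1) poly_mapping_sum_single[of p], subst (1) poly_mapping_sum_single[of q])
      (simp add: sum_distrib_left sum_distrib_right mult_single sum.swap[of _ "Poly_Mapping.keys q"])
  then have "act (p * q) x = (\<Sum>\<alpha>\<in>Poly_Mapping.keys p. \<Sum>\<beta>\<in>Poly_Mapping.keys q.
      sm (Poly_Mapping.lookup p \<alpha> * Poly_Mapping.lookup q \<beta>) (Xmon n X (\<alpha> + \<beta>) x))"
    by (simp add: pact_sum pact_single)
  also have "\<dots> = act p (act q x)"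
    unfolding pact_def
    by (simp add: module_hom.sum[OF module_hom_Xmon] module_hom.scale[OF module_hom_Xmon]
        scale_sum_right Xmon_add)
  finally show ?thesis .
qed

lemma pact_one: "act 1 x = x"
  using pact_single[of 0 1 x] by (simp add: Xmon_zero)

lemma pact_power_commute: "act (g ^ j) (act (g ^ l) x) = act (g ^ l) (act (g ^ j) x)"
  by (simp add: pact_mult[symmetric] mult.commute)

lemma X_pact_commute: "i < n \<Longrightarrow> X i (act p x) = act p (X i x)"
  unfolding pact_def
  by (simp add: module_hom.sum[OF module_hom_X] module_hom.scale[OF module_hom_X] X_Xmon_commute)

lemma D_X_eq: "i < n \<Longrightarrow> j < n \<Longrightarrow> D i (X j x) = X j (D i x) + (if i = j then x else 0)"
  using D_X_commutator[of i j x] by (simp add: diff_eq_eq)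

lemma X_D_X_funpow:
  assumes i: "i < n" and j: "j < n"
  shows "X i (D i ((X j ^^ a) z))
    = (X j ^^ a) (X i (D i z)) + sm (of_nat (if i = j then a else 0)) ((X j ^^ a) z)"
proof (induction a)
  case (Suc a)
  let ?w = "(X j ^^ a) z"
  have "X i (D i ((X j ^^ Suc a) z)) = X i (X j (D i ?w) + (if i = j then ?w else 0))"
    by (simp add: D_X_eq[OF i j])
  also have "\<dots> = X j (X i (D i ?w)) + (if i = j then X j ?w else 0)"
    using i j by (simp add: module_hom.add[OF module_hom_X] module_hom.zero[OF module_hom_X] X_commute)
  also have "\<dots> = (X j ^^ Suc a) (X i (D i z))
      + sm (of_nat (if i = j then a else 0)) (X j ?w) + (if i = j then X j ?w else 0)"
    using Suc j by (simp add: module_hom.add[OF module_hom_X] module_hom.scale[OF module_hom_X])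
  also have "\<dots> = (X j ^^ Suc a) (X i (D i z)) + sm (of_nat (if i = j then Suc a else 0)) ((X j ^^ Suc a) z)"
    by (cases "i = j") (simp_all add: scale_left_distrib add.assoc)
  finally show ?case .
qed simp

lemma X_D_X_prod:
  assumes i: "i < n" and L: "set L \<subseteq> {..<n}" "distinct L"
  shows "X i (D i (X_prod L h y))
    = X_prod L h (X i (D i y)) + sm (of_nat (if i \<in> set L then h i else 0)) (X_prod L h y)"
  using L
proof (induction L)
  case (Cons j L)
  then have j: "j < n" and L': "set L \<subseteq> {..<n}" "distinct L" and jL: "j \<notin> set L" by auto
  note hom_Xpow = module_hom_funpow[OF module_hom_X[OF j]]
  have "X i (D i (X_prod (j # L) h y))
      = (X j ^^ h j) (X i (D i (X_prod L h y)))
        + sm (of_nat (if i = j then h j else 0)) ((X j ^^ h j) (X_prod L h y))"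
    by (simp add: X_prod_Cons X_D_X_funpow[OF i j])
  also have "\<dots> = X_prod (j # L) h (X i (D i y))
      + sm (of_nat (if i \<in> set L then h i else 0)) (X_prod (j # L) h y)
      + sm (of_nat (if i = j then h j else 0)) (X_prod (j # L) h y)"
    by (simp add: Cons.IH[OF L'] X_prod_Cons module_hom.add[OF hom_Xpow] module_hom.scale[OF hom_Xpow])
  also have "\<dots> = X_prod (j # L) h (X i (D i y))
      + sm (of_nat (if i \<in> set (j # L) then h i else 0)) (X_prod (j # L) h y)"
    using jL by (auto simp: add.assoc scale_left_distrib[symmetric])
  finally show ?case .
qed simp

lemma module_hom_euler: "module_hom sm sm E"
  unfolding euler_def[abs_def]
  by (intro module_hom_sum)
    (auto intro: module_hom_compose[unfolded comp_def] module_hom_X module_hom_D module_axioms)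

lemma euler_Xmon:
  "E (Xmon n X \<alpha> y) = Xmon n X \<alpha> (E y) + sm (of_nat (\<Sum>i<n. Poly_Mapping.lookup \<alpha> i)) (Xmon n X \<alpha> y)"
proof -
  have "E (Xmon n X \<alpha> y)
      = (\<Sum>i<n. Xmon n X \<alpha> (X i (D i y)) + sm (of_nat (Poly_Mapping.lookup \<alpha> i)) (Xmon n X \<alpha> y))"
    unfolding euler_def Xmon_eq_X_prod
    by (rule sum.cong) (use X_D_X_prod[of _ "[0..<n]", OF _ _ distinct_upt] atLeast0LessThan in auto)
  then show ?thesis
    by (simp add: sum.distrib euler_def module_hom.sum[OF module_hom_Xmon] scale_sum_left)
qed

lemma euler_pact:
  assumes "homogeneous_of n e g"
  shows "E (act g y) = act g (E y) + sm (of_nat e) (act g y)"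
proof -
  have "E (act g y) = (\<Sum>\<alpha>\<in>Poly_Mapping.keys g. sm (Poly_Mapping.lookup g \<alpha>) (E (Xmon n X \<alpha> y)))"
    unfolding pact_def by (simp add: module_hom.sum[OF module_hom_euler] module_hom.scale[OF module_hom_euler])
  also have "\<dots> = (\<Sum>\<alpha>\<in>Poly_Mapping.keys g. sm (Poly_Mapping.lookup g \<alpha>) (Xmon n X \<alpha> (E y))
        + sm (of_nat e) (sm (Poly_Mapping.lookup g \<alpha>) (Xmon n X \<alpha> y)))"
    using assms unfolding homogeneous_of_def
    by (intro sum.cong) (simp_all add: euler_Xmon mon_deg_eq_sum_lessThan[symmetric]
        scale_right_distrib mult.commute)
  also have "\<dots> = act g (E y) + sm (of_nat e) (act g y)"
    unfolding pact_def by (simp add: sum.distrib scale_sum_right)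
  finally show ?thesis .
qed

lemma X_pact_pderiv:
  assumes i: "i < n"
  shows "X i (act (pderiv_mp i g) m) = (\<Sum>\<alpha>\<in>Poly_Mapping.keys g.
      sm (of_nat (Poly_Mapping.lookup \<alpha> i) * Poly_Mapping.lookup g \<alpha>) (Xmon n X \<alpha> m))"
proof -
  have "X i (act (pderiv_mp i g) m) = (\<Sum>\<alpha>\<in>Poly_Mapping.keys g.
      sm (of_nat (Poly_Mapping.lookup \<alpha> i) * Poly_Mapping.lookup g \<alpha>)
        (X i (Xmon n X (\<alpha> - Poly_Mapping.single i 1) m)))"
    unfolding pderiv_mp_def
    by (simp add: pact_sum pact_single module_hom.sum[OF module_hom_X[OF i]]
        module_hom.scale[OF module_hom_X[OF i]])
  also have "\<dots> = (\<Sum>\<alpha>\<in>Poly_Mapping.keys g.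
      sm (of_nat (Poly_Mapping.lookup \<alpha> i) * Poly_Mapping.lookup g \<alpha>) (Xmon n X \<alpha> m))"
  proof (rule sum.cong)
    fix \<alpha>
    have "Poly_Mapping.lookup \<alpha> i \<noteq> 0
        \<Longrightarrow> X i (Xmon n X (\<alpha> - Poly_Mapping.single i 1) m) = Xmon n X \<alpha> m"
      by (metis Xmon_add Xmon_single[OF i] single_add_diff_single)
    then show "sm (of_nat (Poly_Mapping.lookup \<alpha> i) * Poly_Mapping.lookup g \<alpha>)
          (X i (Xmon n X (\<alpha> - Poly_Mapping.single i 1) m))
        = sm (of_nat (Poly_Mapping.lookup \<alpha> i) * Poly_Mapping.lookup g \<alpha>) (Xmon n X \<alpha> m)"
      by (cases "Poly_Mapping.lookup \<alpha> i = 0") simp_all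
  qed simp
  finally show ?thesis .
qed

lemma euler_identity_pact:
  assumes "homogeneous_of n e g"
  shows "(\<Sum>i<n. X i (act (pderiv_mp i g) m)) = sm (of_nat e) (act g m)"
proof -
  have "(\<Sum>i<n. X i (act (pderiv_mp i g) m)) = (\<Sum>\<alpha>\<in>Poly_Mapping.keys g.
      sm (of_nat (\<Sum>i<n. Poly_Mapping.lookup \<alpha> i) * Poly_Mapping.lookup g \<alpha>) (Xmon n X \<alpha> m))"
    by (simp add: X_pact_pderiv, subst sum.swap) (simp add: scale_sum_left[symmetric] sum_distrib_right)
  also have "\<dots> = (\<Sum>\<alpha>\<in>Poly_Mapping.keys g. sm (of_nat e) (sm (Poly_Mapping.lookup g \<alpha>) (Xmon n X \<alpha> m)))"
    using assms unfolding homogeneous_of_def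
    by (intro sum.cong) (simp_all add: mon_deg_eq_sum_lessThan[symmetric])
  also have "\<dots> = sm (of_nat e) (act g m)"
    unfolding pact_def by (simp add: scale_sum_right)
  finally show ?thesis .
qed

definition euler_shift :: "int \<Rightarrow> 'm \<Rightarrow> 'm" where
  "euler_shift c x = E x - sm (of_int c) x"

lemma module_hom_euler_shift: "module_hom sm sm (euler_shift c)"
  unfolding euler_shift_def[abs_def] by (intro module_hom_sub module_hom_euler module_hom_scale_self)

lemma euler_shift_pact:
  assumes "homogeneous_of n e g"
  shows "euler_shift c (act g y) = act g (euler_shift (c - int e) y)"
  using euler_pact[OF assms, of y]
  by (simp add: euler_shift_def module_hom.diff[OF module_hom_pact] module_hom.scale[OF module_hom_pact]
      scale_left_diff_distrib)

lemma euler_shift_funpow_pact: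
  "homogeneous_of n e g \<Longrightarrow> (euler_shift c ^^ a) (act g y) = act g ((euler_shift (c - int e) ^^ a) y)"
  by (induction a) (simp_all add: euler_shift_pact)

lemma euler_shift_funpow_pact_power:
  assumes "homogeneous_of n e g"
  shows "(euler_shift c ^^ a) (act (g ^ j) y) = act (g ^ j) ((euler_shift (c - int j * int e) ^^ a) y)"
proof (induction j arbitrary: c)
  case (Suc j)
  have "(euler_shift c ^^ a) (act (g ^ Suc j) y) = act g (act (g ^ j) ((euler_shift (c - int e - int j * int e) ^^ a) y))"
    by (simp only: power_Suc pact_mult euler_shift_funpow_pact[OF assms] Suc.IH)
  also have "c - int e - int j * int e = c - int (Suc j) * int e"
    by (simp add: algebra_simps)
  finally show ?case
    by (simp only: power_Suc pact_mult)
qed (simp add: pact_one)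

lemma gen_eulerian_eventually_zero:
  assumes "gen_eulerian n sm X D hom" "z \<in> hom c"
  shows "\<forall>\<^sub>F a in sequentially. (euler_shift c ^^ a) z = 0"
proof -
  have "euler_shift c = (\<lambda>x. E x - sm (of_int c) x)"
    by (rule ext) (simp add: euler_shift_def)
  with assms obtain a0 where a0: "(euler_shift c ^^ a0) z = 0"
    unfolding gen_eulerian_def by auto
  have "(euler_shift c ^^ (b + a0)) z = 0" for b
    by (simp add: funpow_add a0 module_hom.zero[OF module_hom_funpow[OF module_hom_euler_shift]])
  then show ?thesis
    by (intro eventually_sequentiallyI[of a0]) (metis le_add_diff_inverse2)
qed

lemma loc_euler_minus_eq:
  assumes "homogeneous_of n e g"
  shows "loc_euler_minus n sm X D g d (m, k) = (act g (euler_shift (d + int k * int e) m), Suc k)"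
proof -
  have "(\<Sum>i<n. X i (act g (D i m) - sm (of_nat k) (act (pderiv_mp i g) m)))
      = (\<Sum>i<n. act g (X i (D i m))) - sm (of_nat k) (\<Sum>i<n. X i (act (pderiv_mp i g) m))"
    by (simp add: sum_subtractf module_hom.diff[OF module_hom_X] module_hom.scale[OF module_hom_X]
        X_pact_commute scale_sum_right)
  also have "\<dots> = act g (E m) - sm (of_nat k) (sm (of_nat e) (act g m))"
    by (simp add: euler_def module_hom.sum[OF module_hom_pact] euler_identity_pact[OF assms])
  finally show ?thesis
    by (simp add: loc_euler_minus_def euler_shift_def module_hom.diff[OF module_hom_pact]
        module_hom.add[OF module_hom_pact] module_hom.scale[OF module_hom_pact] scale_left_distrib algebra_simps)
qed

lemma loc_euler_minus_funpow:
  assumes "homogeneous_of n e g"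
  shows "(loc_euler_minus n sm X D g d ^^ a) (m, k)
    = (act (g ^ a) ((euler_shift (d + int k * int e) ^^ a) m), k + a)"
proof (induction a)
  case (Suc a)
  have "euler_shift (d + int (k + a) * int e) (act (g ^ a) z)
      = act (g ^ a) (euler_shift (d + int k * int e) z)" for z
    using euler_shift_funpow_pact_power[OF assms, where a = 1 and j = a] by (simp add: algebra_simps)
  with Suc show ?case
    by (simp add: loc_euler_minus_eq[OF assms] pact_mult)
qed (simp add: pact_one)

lemma pact_power_euler_shift_funpow:
  assumes "homogeneous_of n e g"
  shows "act (g ^ j) ((euler_shift c ^^ a) y) = (euler_shift (c + int j * int e) ^^ a) (act (g ^ j) y)"
  using euler_shift_funpow_pact_power[OF assms, where c = "c + int j * int e"] by simp

lemma loc_eq_zero_if_pact_power_zero: "act (g ^ l) x = 0 \<Longrightarrow> loc_eq n sm X g (x, k) (0, 0)"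
  unfolding loc_eq_def by (auto simp: pact_one)

lemma zero_loc_eq_if_loc_eq_zero: "loc_eq n sm X g mk (0, 0) \<Longrightarrow> loc_eq n sm X g (0, 0) mk"
  unfolding loc_eq_def by (auto simp: pact_one module_hom.neg[OF module_hom_pact])

lemma loc_eq_zero_poly: "loc_eq n sm X 0 mk mk'"
  unfolding loc_eq_def by (rule exI[of _ 1]) simp

lemma loc_euler_minus_funpow_eventually_zero:
  assumes g: "homogeneous_of n e g" and M: "gen_eulerian n sm X D hom"
    and mk: "loc_hom n sm X hom g d mk"
  shows "\<forall>\<^sub>F a in sequentially. loc_eq n sm X g ((loc_euler_minus n sm X D g d ^^ a) mk) (0, 0)"
proof (cases "g = 0")
  case False
  obtain m k where mk_eq: "mk = (m, k)" by fastforce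
  obtain m' k' where m': "m' \<in> hom (d + int k' * int e)" and "loc_eq n sm X g (m, k) (m', k')"
    using mk hdeg_eq_if_homogeneous_of[OF g False] unfolding loc_hom_def mk_eq by auto
  then obtain l where "act (g ^ l) (act (g ^ k') m - act (g ^ k) m') = 0"
    unfolding loc_eq_def by auto
  then have cross: "act (g ^ (l + k')) m = act (g ^ (l + k)) m'"
    by (simp add: module_hom.diff[OF module_hom_pact] power_add pact_mult)
  from gen_eulerian_eventually_zero[OF M m'] show ?thesis
  proof (rule eventually_mono)
    fix a
    assume killed: "(euler_shift (d + int k' * int e) ^^ a) m' = 0"
    let ?c = "d + int k * int e"
    have "act (g ^ (l + k')) ((euler_shift ?c ^^ a) m)
        = (euler_shift (?c + int (l + k') * int e) ^^ a) (act (g ^ (l + k)) m')"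
      by (simp add: pact_power_euler_shift_funpow[OF g] cross)
    also have "\<dots> = act (g ^ (l + k)) ((euler_shift (d + int k' * int e) ^^ a) m')"
      using euler_shift_funpow_pact_power[OF g] by (simp add: algebra_simps)
    finally have "act (g ^ (l + k')) (act (g ^ a) ((euler_shift ?c ^^ a) m)) = 0"
      by (simp add: pact_power_commute[of g "l + k'" a] killed)
    then show "loc_eq n sm X g ((loc_euler_minus n sm X D g d ^^ a) mk) (0, 0)"
      by (simp add: mk_eq loc_euler_minus_funpow[OF g] loc_eq_zero_if_pact_power_zero)
  qed
qed (simp add: loc_eq_zero_poly)

lemma coboundary_if_components_zero:
  assumes "\<And>S. S \<subseteq> {..<s} \<Longrightarrow> card S = i \<Longrightarrow> loc_eq n sm X (fS f S) (c S) (0, 0)"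
  shows "coboundary n sm X s f i c"
proof -
  have "cech_d n sm X f (\<lambda>_. (0, 0)) = (\<lambda>_. (0, 0))"
    by (rule ext) (simp add: cech_d_def Let_def if_distrib[symmetric] cong: if_cong)
  with assms show ?thesis
    unfolding coboundary_def coch_eq_def
    by (auto intro!: exI[of _ "\<lambda>_. (0, 0)"] zero_loc_eq_if_loc_eq_zero)
qed

lemma coch_euler_minus_funpow:
  "(coch_euler_minus n sm X D f d ^^ a) c S = (loc_euler_minus n sm X D (fS f S) d ^^ a) (c S)"
  by (induction a) (simp_all add: coch_euler_minus_def)

lemma homogeneous_cochain_eventually_zero:
  assumes f: "\<And>j. j < s \<Longrightarrow> homogeneous_of n (e j) (f j)"
    and M: "gen_eulerian n sm X D hom" and c: "coch_hom n sm X hom s f i d c"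
  shows "\<forall>\<^sub>F a in sequentially. \<forall>S\<in>{S. S \<subseteq> {..<s} \<and> card S = i}.
           loc_eq n sm X (fS f S) ((coch_euler_minus n sm X D f d ^^ a) c S) (0, 0)"
proof (rule eventually_ball_finite)
  show "finite {S. S \<subseteq> {..<s} \<and> card S = i}"
    by (rule finite_subset[of _ "Pow {..<s}"]) auto
  show "\<forall>S\<in>{S. S \<subseteq> {..<s} \<and> card S = i}. \<forall>\<^sub>F a in sequentially.
          loc_eq n sm X (fS f S) ((coch_euler_minus n sm X D f d ^^ a) c S) (0, 0)"
  proof
    fix S assume S: "S \<in> {S. S \<subseteq> {..<s} \<and> card S = i}"
    then have "homogeneous_of n (\<Sum>j\<in>S. e j) (fS f S)"
      using f finite_subset by (intro homogeneous_of_fS) auto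
    from loc_euler_minus_funpow_eventually_zero[OF this M] S c
    show "\<forall>\<^sub>F a in sequentially.
        loc_eq n sm X (fS f S) ((coch_euler_minus n sm X D f d ^^ a) c S) (0, 0)"
      unfolding coch_hom_def coch_euler_minus_funpow by blast
  qed
qed

end

lemma graded_weyl_module_imp_weyl_module:
  assumes "graded_weyl_module n sm X D hom"
  shows "weyl_module sm n X D"
proof -
  have "module sm"
    using assms unfolding graded_weyl_module_def by unfold_locales auto
  then show ?thesis
    unfolding weyl_module_def weyl_module_axioms_def module_hom_iff
    by (intro conjI allI impI) (use assms in \<open>auto simp: graded_weyl_module_def\<close>)
qed

theorem mainTheorem5:
  fixes n s :: nat
    and f :: "nat \<Rightarrow> 'k::field_char_0 mpoly"
    and sm :: "'k \<Rightarrow> 'm::ab_group_add \<Rightarrow> 'm"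
    and X D :: "nat \<Rightarrow> 'm \<Rightarrow> 'm"
    and hom :: "int \<Rightarrow> 'm set"
  assumes "\<forall>j<s. in_vars n (f j) \<and> homogeneous_poly (f j)"
    and "graded_weyl_module n sm X D hom"
    and "gen_eulerian n sm X D hom"
  shows "\<forall>i. local_cohom_gen_eulerian n sm X D hom s f i"
proof -
  interpret weyl_module sm n X D
    using graded_weyl_module_imp_weyl_module[OF assms(2)] .
  have "\<forall>j<s. \<exists>e. homogeneous_of n e (f j)"
    using assms(1) in_vars_homogeneous_poly_imp_homogeneous_of by blast
  then obtain e where e: "\<And>j. j < s \<Longrightarrow> homogeneous_of n (e j) (f j)"
    by metis
  show ?thesis
    unfolding local_cohom_gen_eulerian_def
  proof (intro allI impI)
    fix i d c
    assume "cocycle n sm X s f i c \<and> coch_hom n sm X hom s f i d c"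
    then have "\<forall>\<^sub>F a in sequentially. a \<ge> 1 \<and> (\<forall>S\<in>{S. S \<subseteq> {..<s} \<and> card S = i}.
        loc_eq n sm X (fS f S) ((coch_euler_minus n sm X D f d ^^ a) c S) (0, 0))"
      using homogeneous_cochain_eventually_zero[OF e assms(3)] eventually_ge_at_top
      by (auto intro: eventually_conj)
    then obtain a where "a \<ge> 1" and "\<forall>S\<in>{S. S \<subseteq> {..<s} \<and> card S = i}.
        loc_eq n sm X (fS f S) ((coch_euler_minus n sm X D f d ^^ a) c S) (0, 0)"
      using eventually_happens'[OF sequentially_bot] by blast
    then show "\<exists>a\<ge>1. coboundary n sm X s f i ((coch_euler_minus n sm X D f d ^^ a) c)"
      by (blast intro: coboundary_if_components_zero)
  qed
qed

end
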